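(* In the setup described in the context, assume the Levi-Civita connection $\nabla$ of $g$ is locally flat, i.e. $R=0$. Then $(M,\tilde g,Q)$ is an almost Einstein manifold, and $$\tilde\rho(x,y)=\frac{3\tilde\tau^*+\tilde\tau}{8}\,g(x,y)+\frac{3\tilde\tau+\tilde\tau^*}{8}\,\tilde g(x,y).$$
   Context: Let $M$ be a 3-dimensional smooth manifold. Fix a coordinate chart $(x^1,x^2,x^3)$ with coordinate vector fields $\partial_i$. Structures: - $g$ is a Riemannian metric with $g(\partial_1,\partial_1)=g(\partial_2,\partial_2)=A$, $g(\partial_3,\partial_3)=B$ and $g(\partial_i,\partial_j)=0$ for $i\ne j$. Here $A,B$ are smooth positive functions. - $Q$ is the $(1,1)$-tensor field with $Q\partial_1=\partial_2$, $Q\partial_2=-\partial_1$, $Q\partial_3=\partial_3$. - $P=Q^2$ and $\tilde g(x,y)=g(x,Py)$. Connections and curvature: - $\nabla$ and $\tilde\nabla$ are the Levi-Civita connections of $g$ and $\tilde g$, with curvature tensors $R$ and $\tilde R$ defined by $R(x,y)z=\nabla_x\nabla_yz-\nabla_y\nabla_xz-\nabla_{[x,y]}z$ (analogously for $\tilde R$). - $\tilde R(x,y,z,t)=\tilde g(\tilde R(x,y)z,t)$. Ricci tensor and scalar quantities: - $\tilde\rho(y,z)=\tilde g^{ij}\tilde R(e_i,y,z,e_j)$. - $\tilde\tau=\tilde g^{ij}\tilde\rho(e_i,e_j)$ and $\tilde\tau^*=g^{ij}\tilde\rho(e_i,e_j)$. Definition. $(M,\tilde g,Q)$ is almost Einstein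 if $\tilde\rho=\alpha g+\beta\tilde g$ for smooth functions $\alpha,\beta$. *)

theory Defs
  imports "HOL-Analysis.Analysis"
begin

text \<open>Coordinate framework: the chart domain is an open set U of real^3, points p,
 coordinate vector field d_i corresponds to axis i 1, a (0,2)-tensor field is a matrix-valued
 function p -> (G p $ i $ j) = G(d_i, d_j) at p, a (1,1)-tensor field is a matrix whose
 j-th column holds the components of the image of d_j.\<close>

definition pd :: "3 \<Rightarrow> (real^3 \<Rightarrow> real) \<Rightarrow> real^3 \<Rightarrow> real" where
  "pd i f p = frechet_derivative f (at p) (axis i 1)"

fun Ck_on :: "nat \<Rightarrow> (real^3) set \<Rightarrow> (real^3 \<Rightarrow> real) \<Rightarrow> bool" where
  "Ck_on 0 U f = continuous_on U f"
| "Ck_on (Suc k) U f = ((\<forall>p\<in>U. f differentiable (at p)) \<and> (\<forall>i. Ck_on k U (pd i f)))"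

definition smooth_on :: "(real^3) set \<Rightarrow> (real^3 \<Rightarrow> real) \<Rightarrow> bool" where
  "smooth_on U f = (\<forall>k. Ck_on k U f)"

definition ginv :: "(real^3 \<Rightarrow> real^3^3) \<Rightarrow> real^3 \<Rightarrow> real^3^3" where
  "ginv G p = matrix_inv (G p)"

text \<open>Christoffel symbols of the Levi-Civita connection: nabla_{d_i} d_j = sum_k christ k i j d_k\<close>
definition christ :: "(real^3 \<Rightarrow> real^3^3) \<Rightarrow> 3 \<Rightarrow> 3 \<Rightarrow> 3 \<Rightarrow> real^3 \<Rightarrow> real" where
  "christ G k i j p = (1/2) * (\<Sum>l\<in>UNIV. ginv G p $ k $ l *
      (pd i (\<lambda>q. G q $ j $ l) p + pd j (\<lambda>q. G q $ i $ l) p - pd l (\<lambda>q. G q $ i $ j) p))"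

text \<open>R(d_i,d_j)d_k = sum_l curv G i j k l p d_l, with
  R(x,y)z = nabla_x nabla_y z - nabla_y nabla_x z - nabla_[x,y] z\<close>
definition curv :: "(real^3 \<Rightarrow> real^3^3) \<Rightarrow> 3 \<Rightarrow> 3 \<Rightarrow> 3 \<Rightarrow> 3 \<Rightarrow> real^3 \<Rightarrow> real" where
  "curv G i j k l p = pd i (christ G l j k) p - pd j (christ G l i k) p
     + (\<Sum>m\<in>UNIV. christ G m j k p * christ G l i m p - christ G m i k p * christ G l j m p)"

definition bil :: "(real^3 \<Rightarrow> real^3^3) \<Rightarrow> real^3 \<Rightarrow> real^3 \<Rightarrow> real^3 \<Rightarrow> real" where
  "bil G p x y = (\<Sum>i\<in>UNIV. \<Sum>j\<in>UNIV. x $ i * G p $ i $ j * y $ j)"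

definition curv_vec :: "(real^3 \<Rightarrow> real^3^3) \<Rightarrow> real^3 \<Rightarrow> real^3 \<Rightarrow> real^3 \<Rightarrow> real^3 \<Rightarrow> real^3" where
  "curv_vec G p x y z = (\<chi> l. \<Sum>i\<in>UNIV. \<Sum>j\<in>UNIV. \<Sum>k\<in>UNIV. x $ i * y $ j * z $ k * curv G i j k l p)"

definition curv4 :: "(real^3 \<Rightarrow> real^3^3) \<Rightarrow> real^3 \<Rightarrow> real^3 \<Rightarrow> real^3 \<Rightarrow> real^3 \<Rightarrow> real^3 \<Rightarrow> real" where
  "curv4 G p x y z t = bil G p (curv_vec G p x y z) t"

definition ricci :: "(real^3 \<Rightarrow> real^3^3) \<Rightarrow> real^3 \<Rightarrow> real^3 \<Rightarrow> real^3 \<Rightarrow> real" where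
  "ricci G p y z = (\<Sum>i\<in>UNIV. \<Sum>j\<in>UNIV. ginv G p $ i $ j * curv4 G p (axis i 1) y z (axis j 1))"

definition tau :: "(real^3 \<Rightarrow> real^3^3) \<Rightarrow> real^3 \<Rightarrow> real" where
  "tau Gt p = (\<Sum>i\<in>UNIV. \<Sum>j\<in>UNIV. ginv Gt p $ i $ j * ricci Gt p (axis i 1) (axis j 1))"

definition tau_star :: "(real^3 \<Rightarrow> real^3^3) \<Rightarrow> (real^3 \<Rightarrow> real^3^3) \<Rightarrow> real^3 \<Rightarrow> real" where
  "tau_star G Gt p = (\<Sum>i\<in>UNIV. \<Sum>j\<in>UNIV. ginv G p $ i $ j * ricci Gt p (axis i 1) (axis j 1))"

definition gmet :: "(real^3 \<Rightarrow> real) \<Rightarrow> (real^3 \<Rightarrow> real) \<Rightarrow> real^3 \<Rightarrow> real^3^3" where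
  "gmet A B p = (\<chi> i j. if i \<noteq> j then 0 else if i = 3 then B p else A p)"

definition Qmat :: "real^3^3" where
  "Qmat = (\<chi> i j. if i = 2 \<and> j = 1 then 1 else if i = 1 \<and> j = 2 then -1
                    else if i = 3 \<and> j = 3 then 1 else 0)"

definition Pmat :: "real^3^3" where
  "Pmat = Qmat ** Qmat"

text \<open>gt(x,y) = g(x, P y)\<close>
definition gtil :: "(real^3 \<Rightarrow> real) \<Rightarrow> (real^3 \<Rightarrow> real) \<Rightarrow> real^3 \<Rightarrow> real^3^3" where
  "gtil A B p = gmet A B p ** Pmat"

definition almost_Einstein :: "(real^3) set \<Rightarrow> (real^3 \<Rightarrow> real^3^3) \<Rightarrow> (real^3 \<Rightarrow> real^3^3) \<Rightarrow> bool" where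
  "almost_Einstein U G Gt = (\<exists>\<alpha> \<beta>. smooth_on U \<alpha> \<and> smooth_on U \<beta> \<and>
     (\<forall>p\<in>U. \<forall>x y. ricci Gt p x y = \<alpha> p * bil G p x y + \<beta> p * bil Gt p x y))"

end

theory Submission
  imports Defs
begin

text \<open>In the chart both metrics are diagonal: \<open>g = diag(A, A, B)\<close> and, as \<open>P = diag(-1, -1, 1)\<close>,
  \<open>g\<^sup>~ = diag(-A, -A, B)\<close>. For a diagonal metric the Christoffel symbols, hence all curvature
  components, are explicit in the coefficients and their first two derivatives. Expanding them shows
  that the off-diagonal components of \<open>\<rho>\<^sup>~\<close> and \<open>\<rho>\<^sup>~\<^sub>2\<^sub>2 - \<rho>\<^sup>~\<^sub>1\<^sub>1\<close> are linear combinations of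
  components of \<open>R\<close>. So if \<open>R = 0\<close> then \<open>\<rho>\<^sup>~ = diag(a, a, b)\<close>, which lies in the span of \<open>g\<close> and
  \<open>g\<^sup>~\<close>; the coefficients are recovered from \<open>\<tau>\<^sup>~ = -2a/A + b/B\<close> and \<open>\<tau>\<^sup>~\<^sup>* = 2a/A + b/B\<close>, and
  they are smooth because \<open>\<rho>\<^sup>~\<close> is built from derivatives of smooth functions.\<close>

section \<open>Partial derivatives\<close>

lemma pd_eqI: "(f has_derivative f') (at p) \<Longrightarrow> pd i f p = f' (axis i 1)"
  unfolding pd_def using frechet_derivative_at by metis

lemma pd_const [simp]: "pd i (\<lambda>q. c) = (\<lambda>p. 0)"
  using pd_eqI[OF has_derivative_const] by auto

lemma pd_add:
  assumes "f differentiable at p" "g differentiable at p"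
  shows "pd i (\<lambda>q. f q + g q) p = pd i f p + pd i g p"
proof -
  from assms obtain f' g' where f': "(f has_derivative f') (at p)" and g': "(g has_derivative g') (at p)"
    unfolding differentiable_def by blast
  have "((\<lambda>q. f q + g q) has_derivative (\<lambda>h. f' h + g' h)) (at p)"
    by (rule has_derivative_add[OF f' g'])
  then show ?thesis
    using pd_eqI[OF f'] pd_eqI[OF g'] by (simp add: pd_eqI)
qed

lemma pd_diff:
  assumes "f differentiable at p" "g differentiable at p"
  shows "pd i (\<lambda>q. f q - g q) p = pd i f p - pd i g p"
proof -
  from assms obtain f' g' where f': "(f has_derivative f') (at p)" and g': "(g has_derivative g') (at p)"
    unfolding differentiable_def by blast
  have "((\<lambda>q. f q - g q) has_derivative (\<lambda>h. f' h - g' h)) (at p)"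
    by (rule has_derivative_diff[OF f' g'])
  then show ?thesis
    using pd_eqI[OF f'] pd_eqI[OF g'] by (simp add: pd_eqI)
qed

lemma pd_mult:
  assumes "f differentiable at p" "g differentiable at p"
  shows "pd i (\<lambda>q. f q * g q) p = pd i f p * g p + f p * pd i g p"
proof -
  from assms obtain f' g' where f': "(f has_derivative f') (at p)" and g': "(g has_derivative g') (at p)"
    unfolding differentiable_def by blast
  have "((\<lambda>q. f q * g q) has_derivative (\<lambda>h. f p * g' h + f' h * g p)) (at p)"
    by (rule has_derivative_mult[OF f' g'])
  then show ?thesis
    using pd_eqI[OF f'] pd_eqI[OF g'] by (simp add: pd_eqI)
qed

lemma pd_cmult: "f differentiable at p \<Longrightarrow> pd i (\<lambda>q. c * f q) p = c * pd i f p"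
  using pd_mult[of "\<lambda>q. c" p f i] by simp

lemma pd_inverse:
  assumes "f differentiable at p" "f p \<noteq> 0"
  shows "pd i (\<lambda>q. inverse (f q)) p = - pd i f p * (inverse (f p))\<^sup>2"
proof -
  from assms obtain f' where f': "(f has_derivative f') (at p)"
    unfolding differentiable_def by blast
  have "((\<lambda>q. inverse (f q)) has_derivative (\<lambda>h. - (inverse (f p) * f' h * inverse (f p)))) (at p)"
    by (rule Deriv.has_derivative_inverse[OF assms(2) f'])
  then show ?thesis
    using pd_eqI[OF f'] by (simp add: pd_eqI power2_eq_square)
qed

lemma pd_if_zero: "pd i (\<lambda>q. if c then f q else 0) p = (if c then pd i f p else 0)"
  by (cases c) simp_all

lemma pd_cong:
  assumes "open U" "p \<in> U" "\<And>q. q \<in> U \<Longrightarrow> f q = g q"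
  shows "pd i f p = pd i g p"
proof -
  have "(f has_derivative f') (at p) \<longleftrightarrow> (g has_derivative f') (at p)" for f'
    using has_derivative_transform_within_open[of f f' p UNIV U g]
      has_derivative_transform_within_open[of g f' p UNIV U f] assms by auto
  then show ?thesis
    unfolding pd_def frechet_derivative_def by simp
qed

lemma differentiable_transform_within_open:
  "open U \<Longrightarrow> p \<in> U \<Longrightarrow> (\<And>q. q \<in> U \<Longrightarrow> f q = g q) \<Longrightarrow> f differentiable at p \<Longrightarrow> g differentiable at p"
  unfolding differentiable_def using has_derivative_transform_within_open by blast

section \<open>Smooth functions on an open set\<close>

lemma Ck_on_SucD: "Ck_on (Suc k) U f \<Longrightarrow> Ck_on k U f"
proof (induction k arbitrary: f)
  case 0
  then show ?case
    by (auto intro!: continuous_at_imp_continuous_on differentiable_imp_continuous_within)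
next
  case (Suc k)
  then show ?case by auto
qed

lemma Ck_on_cong: "open U \<Longrightarrow> (\<And>q. q \<in> U \<Longrightarrow> f q = g q) \<Longrightarrow> Ck_on k U f = Ck_on k U g"
proof (induction k arbitrary: f g)
  case 0
  then show ?case using continuous_on_cong by auto
next
  case (Suc k)
  have "(\<forall>p\<in>U. f differentiable at p) = (\<forall>p\<in>U. g differentiable at p)"
    using differentiable_transform_within_open[OF Suc.prems(1)] Suc.prems(2) by metis
  moreover have "Ck_on k U (pd i f) = Ck_on k U (pd i g)" for i
    using Suc.IH[OF Suc.prems(1)] pd_cong[OF Suc.prems(1)] Suc.prems(2) by metis
  ultimately show ?case by simp
qed

lemma Ck_on_const: "Ck_on k U (\<lambda>q. c)"
  by (induction k arbitrary: c) auto

lemma Ck_on_add: "open U \<Longrightarrow> Ck_on k U f \<Longrightarrow> Ck_on k U g \<Longrightarrow> Ck_on k U (\<lambda>q. f q + g q)"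
proof (induction k arbitrary: f g)
  case 0
  then show ?case by (auto intro: continuous_on_add)
next
  case (Suc k)
  have "Ck_on k U (pd i (\<lambda>q. f q + g q)) = Ck_on k U (\<lambda>q. pd i f q + pd i g q)" for i
    by (rule Ck_on_cong[OF Suc.prems(1)]) (use Suc.prems pd_add in auto)
  with Suc show ?case by auto
qed

lemma Ck_on_mult: "open U \<Longrightarrow> Ck_on k U f \<Longrightarrow> Ck_on k U g \<Longrightarrow> Ck_on k U (\<lambda>q. f q * g q)"
proof (induction k arbitrary: f g)
  case 0
  then show ?case by (auto intro: continuous_on_mult)
next
  case (Suc k)
  have "Ck_on k U (pd i (\<lambda>q. f q * g q)) = Ck_on k U (\<lambda>q. pd i f q * g q + f q * pd i g q)" for i
    by (rule Ck_on_cong[OF Suc.prems(1)]) (use Suc.prems pd_mult in auto)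
  moreover have "Ck_on k U f" "Ck_on k U g"
    using Suc.prems Ck_on_SucD by blast+
  ultimately show ?case
    using Suc Ck_on_add by auto
qed

lemma Ck_on_inverse:
  "open U \<Longrightarrow> Ck_on k U f \<Longrightarrow> (\<forall>q\<in>U. f q \<noteq> 0) \<Longrightarrow> Ck_on k U (\<lambda>q. inverse (f q))"
proof (induction k arbitrary: f)
  case 0
  then show ?case by (auto intro: continuous_on_inverse)
next
  case (Suc k)
  have "Ck_on k U (pd i (\<lambda>q. inverse (f q)))" for i
  proof -
    have "Ck_on k U (\<lambda>q. inverse (f q))"
      using Suc Ck_on_SucD by blast
    then have "Ck_on k U (\<lambda>q. (-1) * pd i f q * (inverse (f q) * inverse (f q)))"
      using Suc.prems by (intro Ck_on_mult Ck_on_const) auto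
    moreover have "Ck_on k U (pd i (\<lambda>q. inverse (f q))) =
        Ck_on k U (\<lambda>q. (-1) * pd i f q * (inverse (f q) * inverse (f q)))"
      by (rule Ck_on_cong[OF Suc.prems(1)])
        (use Suc.prems pd_inverse in \<open>auto simp: power2_eq_square\<close>)
    ultimately show ?thesis
      by simp
  qed
  moreover have "\<forall>p\<in>U. (\<lambda>q. inverse (f q)) differentiable at p"
    using Suc.prems by (auto intro!: derivative_intros)
  ultimately show ?case by simp
qed

lemma smooth_on_const: "smooth_on U (\<lambda>q. c)"
  unfolding smooth_on_def using Ck_on_const by blast

lemma smooth_on_add: "open U \<Longrightarrow> smooth_on U f \<Longrightarrow> smooth_on U g \<Longrightarrow> smooth_on U (\<lambda>q. f q + g q)"
  unfolding smooth_on_def using Ck_on_add by blast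

lemma smooth_on_mult: "open U \<Longrightarrow> smooth_on U f \<Longrightarrow> smooth_on U g \<Longrightarrow> smooth_on U (\<lambda>q. f q * g q)"
  unfolding smooth_on_def using Ck_on_mult by blast

lemma smooth_on_inverse:
  "open U \<Longrightarrow> smooth_on U f \<Longrightarrow> (\<forall>q\<in>U. f q \<noteq> 0) \<Longrightarrow> smooth_on U (\<lambda>q. inverse (f q))"
  unfolding smooth_on_def using Ck_on_inverse by blast

lemma smooth_on_pd: "smooth_on U f \<Longrightarrow> smooth_on U (pd i f)"
  unfolding smooth_on_def by (metis Ck_on.simps(2))

lemma smooth_on_cong: "open U \<Longrightarrow> (\<And>q. q \<in> U \<Longrightarrow> f q = g q) \<Longrightarrow> smooth_on U f \<Longrightarrow> smooth_on U g"
  unfolding smooth_on_def using Ck_on_cong by blast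

lemma smooth_on_imp_differentiable: "smooth_on U f \<Longrightarrow> p \<in> U \<Longrightarrow> f differentiable at p"
  unfolding smooth_on_def by (metis Ck_on.simps(2))

lemma smooth_on_uminus: "open U \<Longrightarrow> smooth_on U f \<Longrightarrow> smooth_on U (\<lambda>q. - f q)"
  using smooth_on_mult[of U "\<lambda>q. -1" f] smooth_on_const by simp

lemma smooth_on_diff: "open U \<Longrightarrow> smooth_on U f \<Longrightarrow> smooth_on U g \<Longrightarrow> smooth_on U (\<lambda>q. f q - g q)"
  using smooth_on_add[of U f "\<lambda>q. - g q"] smooth_on_uminus by simp

lemma smooth_on_divide:
  "open U \<Longrightarrow> smooth_on U f \<Longrightarrow> smooth_on U g \<Longrightarrow> (\<forall>q\<in>U. g q \<noteq> 0) \<Longrightarrow> smooth_on U (\<lambda>q. f q / g q)"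
  using smooth_on_mult[of U f "\<lambda>q. inverse (g q)"] smooth_on_inverse by (simp add: divide_inverse)

lemma smooth_on_if_zero: "smooth_on U f \<Longrightarrow> smooth_on U (\<lambda>q. if c then f q else 0)"
  by (cases c) (simp_all add: smooth_on_const)

lemma smooth_on_sum:
  assumes "open U"
  shows "finite S \<Longrightarrow> (\<And>x. x \<in> S \<Longrightarrow> smooth_on U (f x)) \<Longrightarrow> smooth_on U (\<lambda>q. \<Sum>x\<in>S. f x q)"
  by (induction S rule: finite_induct) (simp_all add: assms smooth_on_const smooth_on_add)

section \<open>Diagonal metrics\<close>

definition diag_metric :: "(3 \<Rightarrow> real^3 \<Rightarrow> real) \<Rightarrow> real^3 \<Rightarrow> real^3^3" where
  "diag_metric h q = (\<chi> i j. if i = j then h i q else 0)"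

lemma matrix_inv_unique:
  fixes M N :: "'a::semiring_1^'n^'n"
  assumes "M ** N = mat 1" "N ** M = mat 1"
  shows "matrix_inv M = N"
proof -
  define M' where "M' = matrix_inv M"
  have "M ** M' = mat 1 \<and> M' ** M = mat 1"
    unfolding M'_def matrix_inv_def by (rule someI[of _ N]) (use assms in blast)
  then have "M' = M' ** (M ** N)"
    using assms by (simp add: matrix_mul_rid)
  also have "\<dots> = (M' ** M) ** N"
    by (simp add: matrix_mul_assoc)
  also have "\<dots> = N"
    using \<open>M ** M' = mat 1 \<and> M' ** M = mat 1\<close> by (simp add: matrix_mul_lid)
  finally show ?thesis
    unfolding M'_def .
qed

lemma sum_delta_3: "(\<Sum>l\<in>(UNIV::3 set). (if k = l then a else 0) * X l) = a * (X k :: real)"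
  using exhaust_3[of k] by (auto simp: sum_3)

lemma ginv_diag_metric:
  assumes "\<And>i. h i q \<noteq> 0"
  shows "ginv (diag_metric h) q = (\<chi> i j. if i = j then inverse (h i q) else 0)"
  unfolding ginv_def
  by (rule matrix_inv_unique)
    (use assms in \<open>simp_all add: matrix_matrix_mult_def mat_def vec_eq_iff diag_metric_def sum_3 forall_3\<close>)

text \<open>\<open>christ_diag_num h k i j = 2 h\<^sub>k \<Gamma>\<^sup>k\<^sub>i\<^sub>j\<close>, kept separate so that \<open>\<Gamma>\<^sup>k\<^sub>i\<^sub>j\<close> can be differentiated
  by the product rule.\<close>

definition christ_diag_num :: "(3 \<Rightarrow> real^3 \<Rightarrow> real) \<Rightarrow> 3 \<Rightarrow> 3 \<Rightarrow> 3 \<Rightarrow> real^3 \<Rightarrow> real" where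
  "christ_diag_num h k i j q = (if j = k then pd i (h k) q else 0) + (if i = k then pd j (h k) q else 0)
     - (if i = j then pd k (h i) q else 0)"

definition christ_diag :: "(3 \<Rightarrow> real^3 \<Rightarrow> real) \<Rightarrow> 3 \<Rightarrow> 3 \<Rightarrow> 3 \<Rightarrow> real^3 \<Rightarrow> real" where
  "christ_diag h k i j q = (1/2) * (inverse (h k q) * christ_diag_num h k i j q)"

lemma christ_diag_metric:
  assumes "\<And>i. h i q \<noteq> 0"
  shows "christ (diag_metric h) k i j q = christ_diag h k i j q"
proof -
  have "(\<lambda>q. diag_metric h q $ b $ c) = (if b = c then h b else (\<lambda>q. 0))" for b c
    by (auto simp: diag_metric_def)
  then have "pd a (\<lambda>q. diag_metric h q $ b $ c) q = (if b = c then pd a (h b) q else 0)" for a b c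
    by simp
  then show ?thesis
    unfolding christ_def christ_diag_def christ_diag_num_def ginv_diag_metric[of h q, OF assms]
    by (simp only: vec_lambda_beta sum_delta_3) (simp cong: if_cong)
qed

lemma bil_diag_metric: "bil (diag_metric h) p x y = (\<Sum>i\<in>UNIV. x$i * h i p * y$i)"
  by (simp add: bil_def diag_metric_def sum_3)

lemma sum_axis_left: "(\<Sum>a\<in>(UNIV::3 set). axis i (1::real) $ a * F a) = (F i :: real)"
  using exhaust_3[of i] by (auto simp: sum_3 axis_def)

lemma sum_axis_right: "(\<Sum>a\<in>(UNIV::3 set). F a * axis i (1::real) $ a) = (F i :: real)"
  using exhaust_3[of i] by (auto simp: sum_3 axis_def)

definition ricci_diag :: "(3 \<Rightarrow> real^3 \<Rightarrow> real) \<Rightarrow> 3 \<Rightarrow> 3 \<Rightarrow> real^3 \<Rightarrow> real" where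
  "ricci_diag h b c p = (\<Sum>i\<in>UNIV. curv (diag_metric h) i b c i p)"

lemma ricci_diag_metric:
  assumes "\<And>i. h i p \<noteq> 0"
  shows "ricci (diag_metric h) p y z = (\<Sum>b\<in>UNIV. \<Sum>c\<in>UNIV. y$b * z$c * ricci_diag h b c p)"
proof -
  have "curv_vec G p (axis i 1) y z $ l = (\<Sum>b\<in>UNIV. \<Sum>c\<in>UNIV. y$b * z$c * curv G i b c l p)"
    for G i l
    unfolding curv_vec_def by (simp add: mult.assoc sum_distrib_left[symmetric] sum_axis_left)
  moreover have "bil (diag_metric h) p x (axis j 1) = x$j * h j p" for x j
    unfolding bil_diag_metric by (rule sum_axis_right)
  ultimately have "ricci (diag_metric h) p y z =
      (\<Sum>i\<in>UNIV. \<Sum>b\<in>UNIV. \<Sum>c\<in>UNIV. y$b * z$c * curv (diag_metric h) i b c i p)"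
    unfolding ricci_def ginv_diag_metric[of h p, OF assms] curv4_def
    by (simp only: vec_lambda_beta sum_delta_3) (rule sum.cong, use assms in auto)
  then show ?thesis
    unfolding ricci_diag_def by (simp add: sum_3 algebra_simps)
qed

lemma ricci_diag_metric_axis:
  assumes "\<And>i. h i p \<noteq> 0"
  shows "ricci (diag_metric h) p (axis b 1) (axis c 1) = ricci_diag h b c p"
  unfolding ricci_diag_metric[of h p, OF assms]
  by (simp only: mult.assoc sum_distrib_left[symmetric] sum_axis_left)

lemma tau_diag_metric:
  assumes "\<And>i. h i p \<noteq> 0"
  shows "tau (diag_metric h) p = (\<Sum>i\<in>UNIV. inverse (h i p) * ricci_diag h i i p)"
  unfolding tau_def ginv_diag_metric[of h p, OF assms] ricci_diag_metric_axis[of h p, OF assms]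
  by (simp add: sum_3)

lemma tau_star_diag_metric:
  assumes "\<And>i. h i p \<noteq> 0" "\<And>i. g i p \<noteq> 0"
  shows "tau_star (diag_metric g) (diag_metric h) p = (\<Sum>i\<in>UNIV. inverse (g i p) * ricci_diag h i i p)"
  unfolding tau_star_def ginv_diag_metric[of g p, OF assms(2)] ricci_diag_metric_axis[of h p, OF assms(1)]
  by (simp add: sum_3)

locale smooth_diag_metric =
  fixes U :: "(real^3) set" and h :: "3 \<Rightarrow> real^3 \<Rightarrow> real"
  assumes open_U: "open U" and smooth: "\<And>i. smooth_on U (h i)"
    and nonzero: "\<And>q i. q \<in> U \<Longrightarrow> h i q \<noteq> 0"
begin

lemma smooth_christ_diag_num: "smooth_on U (christ_diag_num h k i j)"
  unfolding christ_diag_num_def[abs_def]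
  by (intro smooth_on_add smooth_on_diff smooth_on_if_zero smooth_on_pd smooth open_U)

lemma smooth_christ_diag: "smooth_on U (christ_diag h k i j)"
  unfolding christ_diag_def[abs_def]
  by (intro smooth_on_mult smooth_on_inverse smooth_christ_diag_num smooth_on_const smooth open_U)
    (use nonzero in auto)

lemma smooth_christ: "smooth_on U (christ (diag_metric h) k i j)"
  using smooth_on_cong[OF open_U _ smooth_christ_diag] christ_diag_metric nonzero by metis

lemma smooth_curv: "smooth_on U (curv (diag_metric h) i j k l)"
  unfolding curv_def[abs_def]
  by (intro smooth_on_add smooth_on_diff smooth_on_sum smooth_on_mult smooth_on_pd smooth_christ open_U)
    simp_all

lemma smooth_ricci_diag: "smooth_on U (ricci_diag h b c)"
  unfolding ricci_diag_def[abs_def] by (intro smooth_on_sum smooth_curv open_U) simp_all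

lemma smooth_tau: "smooth_on U (tau (diag_metric h))"
proof -
  have "smooth_on U (\<lambda>q. \<Sum>i\<in>UNIV. inverse (h i q) * ricci_diag h i i q)"
    by (intro smooth_on_sum smooth_on_mult smooth_on_inverse smooth_ricci_diag smooth open_U)
      (use nonzero in auto)
  then show ?thesis
    by (rule smooth_on_cong[OF open_U, rotated]) (simp add: tau_diag_metric nonzero)
qed

lemma smooth_tau_star:
  assumes "\<And>i. smooth_on U (g i)" "\<And>q i. q \<in> U \<Longrightarrow> g i q \<noteq> 0"
  shows "smooth_on U (tau_star (diag_metric g) (diag_metric h))"
proof -
  have "smooth_on U (\<lambda>q. \<Sum>i\<in>UNIV. inverse (g i q) * ricci_diag h i i q)"
    by (intro smooth_on_sum smooth_on_mult smooth_on_inverse smooth_ricci_diag assms open_U)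
      (use assms in auto)
  then show ?thesis
    by (rule smooth_on_cong[OF open_U, rotated]) (simp add: tau_star_diag_metric nonzero assms)
qed

lemma pd_christ_diag_num:
  assumes "p \<in> U"
  shows "pd m (christ_diag_num h k i j) p =
      (if j = k then pd m (pd i (h k)) p else 0) + (if i = k then pd m (pd j (h k)) p else 0)
    - (if i = j then pd m (pd k (h i)) p else 0)"
proof -
  have "(\<lambda>q. if c then pd a (h b) q else 0) differentiable at p" for c a b
    using smooth_on_imp_differentiable[OF smooth_on_if_zero[OF smooth_on_pd[OF smooth]] assms] .
  then show ?thesis
    unfolding christ_diag_num_def[abs_def]
    by (simp add: pd_add pd_diff pd_if_zero differentiable_add)
qed

lemma pd_christ_diag:
  assumes "p \<in> U"
  shows "pd m (christ_diag h k i j) p = (1/2) * (- pd m (h k) p * (inverse (h k p))\<^sup>2 * christ_diag_num h k i j p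
       + inverse (h k p) * pd m (christ_diag_num h k i j) p)"
proof -
  have h: "h k differentiable at p" and num: "christ_diag_num h k i j differentiable at p"
    using smooth_on_imp_differentiable[OF _ assms] smooth smooth_christ_diag_num by blast+
  have inv: "(\<lambda>q. inverse (h k q)) differentiable at p"
    using differentiable_inverse[OF h nonzero[OF assms]] .
  have "pd m (christ_diag h k i j) p = (1/2) * pd m (\<lambda>q. inverse (h k q) * christ_diag_num h k i j q) p"
    unfolding christ_diag_def[abs_def] by (rule pd_cmult) (rule differentiable_mult[OF inv num])
  also have "\<dots> = (1/2) * (pd m (\<lambda>q. inverse (h k q)) p * christ_diag_num h k i j p
      + inverse (h k p) * pd m (christ_diag_num h k i j) p)"
    by (simp only: pd_mult[OF inv num])
  also have "pd m (\<lambda>q. inverse (h k q)) p = - pd m (h k) p * (inverse (h k p))\<^sup>2"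
    by (rule pd_inverse[OF h nonzero[OF assms]])
  finally show ?thesis .
qed

lemma curv_diag_metric:
  assumes "p \<in> U"
  shows "curv (diag_metric h) i j k l p = pd i (christ_diag h l j k) p - pd j (christ_diag h l i k) p
   + (\<Sum>m\<in>UNIV. christ_diag h m j k p * christ_diag h l i m p - christ_diag h m i k p * christ_diag h l j m p)"
proof -
  have "pd a (christ (diag_metric h) c d e) p = pd a (christ_diag h c d e) p" for a c d e
    by (rule pd_cong[OF open_U assms]) (rule christ_diag_metric, rule nonzero)
  then show ?thesis
    unfolding curv_def using christ_diag_metric[of h p] nonzero[OF assms] by simp
qed

end

section \<open>The metrics \<open>g\<close> and \<open>g\<^sup>~\<close>\<close>

definition gmet_coeff :: "(real^3 \<Rightarrow> real) \<Rightarrow> (real^3 \<Rightarrow> real) \<Rightarrow> 3 \<Rightarrow> real^3 \<Rightarrow> real" where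
  "gmet_coeff A B i = (if i = 3 then B else A)"

definition gtil_coeff :: "(real^3 \<Rightarrow> real) \<Rightarrow> (real^3 \<Rightarrow> real) \<Rightarrow> 3 \<Rightarrow> real^3 \<Rightarrow> real" where
  "gtil_coeff A B i = (if i = 3 then B else (\<lambda>q. - A q))"

lemma gmet_coeff_simps [simp]: "gmet_coeff A B 1 = A" "gmet_coeff A B 2 = A" "gmet_coeff A B 3 = B"
  by (simp_all add: gmet_coeff_def)

lemma gtil_coeff_simps [simp]:
  "gtil_coeff A B 1 = (\<lambda>q. - A q)" "gtil_coeff A B 2 = (\<lambda>q. - A q)" "gtil_coeff A B 3 = B"
  by (simp_all add: gtil_coeff_def)

lemma gmet_eq_diag_metric: "gmet A B = diag_metric (gmet_coeff A B)"
  by (rule ext) (auto simp: gmet_def diag_metric_def gmet_coeff_def vec_eq_iff)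

lemma Pmat_eq: "Pmat = (\<chi> i j. if i = j then (if i = 3 then 1 else -1) else 0)"
  unfolding Pmat_def Qmat_def by (simp add: matrix_matrix_mult_def vec_eq_iff forall_3 sum_3)

lemma gtil_eq_diag_metric: "gtil A B = diag_metric (gtil_coeff A B)"
  unfolding gtil_def Pmat_eq
  by (rule ext) (simp add: gmet_def diag_metric_def gtil_coeff_def matrix_matrix_mult_def vec_eq_iff forall_3 sum_3)

locale smooth_positive_coeffs =
  fixes U :: "(real^3) set" and A B :: "real^3 \<Rightarrow> real"
  assumes open_U: "open U" and smooth_A: "smooth_on U A" and smooth_B: "smooth_on U B"
    and A_pos: "\<And>q. q \<in> U \<Longrightarrow> A q > 0" and B_pos: "\<And>q. q \<in> U \<Longrightarrow> B q > 0"
begin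

sublocale gmet: smooth_diag_metric U "gmet_coeff A B"
  by unfold_locales (auto simp: open_U gmet_coeff_def smooth_A smooth_B dest: A_pos B_pos)

sublocale gtil: smooth_diag_metric U "gtil_coeff A B"
  by unfold_locales
    (auto simp: open_U gtil_coeff_def smooth_B smooth_on_uminus[OF open_U smooth_A] dest: A_pos B_pos)

lemma pd_uminus_A: "p \<in> U \<Longrightarrow> pd m (\<lambda>q. - A q) p = - pd m A p"
  using pd_cmult[of A p m "-1"] smooth_on_imp_differentiable[OF smooth_A] by simp

lemma pd_pd_uminus_A:
  assumes "p \<in> U"
  shows "pd m (pd n (\<lambda>q. - A q)) p = - pd m (pd n A) p"
proof -
  have "pd m (pd n (\<lambda>q. - A q)) p = pd m (\<lambda>q. (-1) * pd n A q) p"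
    by (rule pd_cong[OF open_U assms]) (simp add: pd_uminus_A)
  also have "\<dots> = - pd m (pd n A) p"
    using pd_cmult[of "pd n A" p m "-1"] smooth_on_imp_differentiable[OF smooth_on_pd[OF smooth_A] assms]
    by simp
  finally show ?thesis .
qed

lemma ricci_gtil_in_curv_gmet:
  assumes "p \<in> U"
  defines "R \<equiv> \<lambda>i j k l. curv (diag_metric (gmet_coeff A B)) i j k l p"
  shows "ricci_diag (gtil_coeff A B) 1 2 p = - R 1 2 1 1 - R 1 3 2 3"
    and "ricci_diag (gtil_coeff A B) 2 1 p = R 1 2 1 1 + R 1 2 3 3 - R 1 3 2 3"
    and "ricci_diag (gtil_coeff A B) 1 3 p = B p / A p * R 1 2 2 3 - R 1 3 3 3"
    and "ricci_diag (gtil_coeff A B) 3 1 p = B p / A p * R 1 2 2 3 + 2 * R 1 3 1 1"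
    and "ricci_diag (gtil_coeff A B) 2 3 p = - (B p / A p) * R 1 2 1 3 - R 2 3 3 3"
    and "ricci_diag (gtil_coeff A B) 3 2 p = B p / A p * R 1 2 1 3 - 2 * R 1 3 1 2"
    and "ricci_diag (gtil_coeff A B) 2 2 p - ricci_diag (gtil_coeff A B) 1 1 p = R 1 3 1 3 - R 2 3 2 3"
  using A_pos[OF \<open>p \<in> U\<close>] B_pos[OF \<open>p \<in> U\<close>]
  by (simp add: R_def ricci_diag_def sum_3 gmet.curv_diag_metric gtil.curv_diag_metric
      gmet.pd_christ_diag gtil.pd_christ_diag gmet.pd_christ_diag_num gtil.pd_christ_diag_num
      christ_diag_def christ_diag_num_def pd_uminus_A pd_pd_uminus_A \<open>p \<in> U\<close>; simp add: field_simps; (algebra)?)+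

lemma ricci_gtil_eq_if_flat:
  assumes "p \<in> U" and flat: "\<forall>i j k l. curv (gmet A B) i j k l p = 0"
  shows "ricci (gtil A B) p x y =
        (3 * tau_star (gmet A B) (gtil A B) p + tau (gtil A B) p) / 8 * bil (gmet A B) p x y
      + (3 * tau (gtil A B) p + tau_star (gmet A B) (gtil A B) p) / 8 * bil (gtil A B) p x y"
proof -
  have "curv (diag_metric (gmet_coeff A B)) i j k l p = 0" for i j k l
    using flat by (simp add: gmet_eq_diag_metric)
  then have "ricci_diag (gtil_coeff A B) 1 2 p = 0" "ricci_diag (gtil_coeff A B) 2 1 p = 0"
    "ricci_diag (gtil_coeff A B) 1 3 p = 0" "ricci_diag (gtil_coeff A B) 3 1 p = 0"
    "ricci_diag (gtil_coeff A B) 2 3 p = 0" "ricci_diag (gtil_coeff A B) 3 2 p = 0"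
    "ricci_diag (gtil_coeff A B) 2 2 p = ricci_diag (gtil_coeff A B) 1 1 p"
    using ricci_gtil_in_curv_gmet[OF \<open>p \<in> U\<close>] by simp_all
  moreover note A_pos[OF \<open>p \<in> U\<close>] B_pos[OF \<open>p \<in> U\<close>]
  ultimately show ?thesis
    unfolding gtil_eq_diag_metric gmet_eq_diag_metric bil_diag_metric
      ricci_diag_metric[of "gtil_coeff A B" p, OF gtil.nonzero[OF \<open>p \<in> U\<close>]]
      tau_diag_metric[of "gtil_coeff A B" p, OF gtil.nonzero[OF \<open>p \<in> U\<close>]]
      tau_star_diag_metric[of "gtil_coeff A B" p "gmet_coeff A B",
        OF gtil.nonzero[OF \<open>p \<in> U\<close>] gmet.nonzero[OF \<open>p \<in> U\<close>]]
    by (simp add: sum_3; simp add: field_simps; (algebra)?)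
qed

end

theorem proposition4p5:
  fixes U :: "(real^3) set" and A B :: "real^3 \<Rightarrow> real"
  assumes "open U"
    and "smooth_on U A" and "smooth_on U B"
    and "\<forall>p\<in>U. A p > 0" and "\<forall>p\<in>U. B p > 0"
    and "\<forall>p\<in>U. \<forall>i j k l. curv (gmet A B) i j k l p = 0"
  shows "almost_Einstein U (gmet A B) (gtil A B) \<and>
    (\<forall>p\<in>U. \<forall>x y. ricci (gtil A B) p x y =
        (3 * tau_star (gmet A B) (gtil A B) p + tau (gtil A B) p) / 8 * bil (gmet A B) p x y
      + (3 * tau (gtil A B) p + tau_star (gmet A B) (gtil A B) p) / 8 * bil (gtil A B) p x y)"
proof -
  interpret smooth_positive_coeffs U A B
    using assms by unfold_locales auto
  have ricci: "\<forall>p\<in>U. \<forall>x y. ricci (gtil A B) p x y =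
        (3 * tau_star (gmet A B) (gtil A B) p + tau (gtil A B) p) / 8 * bil (gmet A B) p x y
      + (3 * tau (gtil A B) p + tau_star (gmet A B) (gtil A B) p) / 8 * bil (gtil A B) p x y"
    using ricci_gtil_eq_if_flat assms(6) by blast
  have "smooth_on U (tau (gtil A B))" "smooth_on U (tau_star (gmet A B) (gtil A B))"
    unfolding gtil_eq_diag_metric gmet_eq_diag_metric
    by (rule gtil.smooth_tau, rule gtil.smooth_tau_star[OF gmet.smooth gmet.nonzero])
  then have "smooth_on U (\<lambda>p. (3 * tau_star (gmet A B) (gtil A B) p + tau (gtil A B) p) / 8)"
    "smooth_on U (\<lambda>p. (3 * tau (gtil A B) p + tau_star (gmet A B) (gtil A B) p) / 8)"
    by (intro smooth_on_divide smooth_on_add smooth_on_mult smooth_on_const open_U; simp)+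
  with ricci show ?thesis
    unfolding almost_Einstein_def by blast
qed

end
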